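(* With $\lambda:=\frac{-\beta+\sqrt{-1}\sqrt{4\alpha-\beta^2}}{2}:\Omega\to\mathbb C$, the structure is rigid, i.e. $i_x+i\,i_y=0$ on $\Omega$, if and only if $\lambda_x+\lambda\,\lambda_y=0$ on $\Omega$ (ordinary complex multiplication and partial derivatives).
   Context: Let $\Omega\subset\mathbb R^2$ be open with coordinates $(x,y)$, and let $\alpha,\beta\in C^1(\Omega,\mathbb R)$ satisfy $\Delta:=4\alpha-\beta^2>0$ on $\Omega$. For $z\in\Omega$ let $A_z:=\mathbb R[X]/(X^2+\beta(z)X+\alpha(z))$ and let $i=i(z)$ denote the class of $X$, so $i^2+\beta i+\alpha=0$ and $\{1,i(z)\}$ is a real basis of $A_z$. In each fiber $2i+\beta$ is invertible with $(2i+\beta)^{-1}=(-\beta-2i)/\Delta$. The derivatives of the generator are the sections $i_x:=-(\alpha_x+\beta_x i)(2i+\beta)^{-1}$, $i_y:=-(\alpha_y+\beta_y i)(2i+\beta)^{-1}$. The structure is called rigid if $i_x+i\,i_y=0$ on $\Omega$. $\sqrt{-1}$ denotes the imaginary unit of $\mathbb C$. *)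

theory Defs
  imports "HOL-Analysis.Analysis"
begin

definition px :: "(real \<times> real \<Rightarrow> 'a::real_normed_vector) \<Rightarrow> real \<times> real \<Rightarrow> 'a" where
  "px f z = vector_derivative (\<lambda>t. f (t, snd z)) (at (fst z))"

definition py :: "(real \<times> real \<Rightarrow> 'a::real_normed_vector) \<Rightarrow> real \<times> real \<Rightarrow> 'a" where
  "py f z = vector_derivative (\<lambda>t. f (fst z, t)) (at (snd z))"

definition C1_on :: "(real \<times> real) set \<Rightarrow> (real \<times> real \<Rightarrow> real) \<Rightarrow> bool" where
  "C1_on \<Omega> f \<longleftrightarrow> (\<exists>f'. (\<forall>z\<in>\<Omega>. (f has_derivative blinfun_apply (f' z)) (at z))
                         \<and> continuous_on \<Omega> f')"

text \<open>The fiber algebra A_z = R[X]/(X^2 + b X + a) (a = alpha z, b = beta z); the element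
  p + q i is represented by the pair (p, q) in the basis {1, i}.  Since i^2 = - a - b i,
  (p + q i)(r + s i) = (pr - qs a) + (ps + qr - qs b) i.\<close>

definition amul :: "real \<Rightarrow> real \<Rightarrow> real \<times> real \<Rightarrow> real \<times> real \<Rightarrow> real \<times> real" where
  "amul a b u v = (fst u * fst v - snd u * snd v * a,
                   fst u * snd v + snd u * fst v - snd u * snd v * b)"

definition gen :: "real \<times> real" where "gen = (0, 1)"   \<comment> \<open>the class i of X\<close>

text \<open>(2i+beta)^{-1} = (-beta - 2i)/Delta, with Delta = 4 alpha - beta^2.\<close>
definition inv2ib :: "real \<Rightarrow> real \<Rightarrow> real \<times> real" where
  "inv2ib a b = (- b / (4*a - b^2), - 2 / (4*a - b^2))"

definition i_x :: "(real \<times> real \<Rightarrow> real) \<Rightarrow> (real \<times> real \<Rightarrow> real) \<Rightarrow> real \<times> real \<Rightarrow> real \<times> real" where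
  "i_x \<alpha> \<beta> z = - amul (\<alpha> z) (\<beta> z) (px \<alpha> z, px \<beta> z) (inv2ib (\<alpha> z) (\<beta> z))"

definition i_y :: "(real \<times> real \<Rightarrow> real) \<Rightarrow> (real \<times> real \<Rightarrow> real) \<Rightarrow> real \<times> real \<Rightarrow> real \<times> real" where
  "i_y \<alpha> \<beta> z = - amul (\<alpha> z) (\<beta> z) (py \<alpha> z, py \<beta> z) (inv2ib (\<alpha> z) (\<beta> z))"

definition rigid :: "(real \<times> real) set \<Rightarrow> (real \<times> real \<Rightarrow> real) \<Rightarrow> (real \<times> real \<Rightarrow> real) \<Rightarrow> bool" where
  "rigid \<Omega> \<alpha> \<beta> \<longleftrightarrow> (\<forall>z\<in>\<Omega>. i_x \<alpha> \<beta> z + amul (\<alpha> z) (\<beta> z) gen (i_y \<alpha> \<beta> z) = 0)"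

definition lam :: "(real \<times> real \<Rightarrow> real) \<Rightarrow> (real \<times> real \<Rightarrow> real) \<Rightarrow> real \<times> real \<Rightarrow> complex" where
  "lam \<alpha> \<beta> z = (- complex_of_real (\<beta> z) + \<i> * complex_of_real (sqrt (4 * \<alpha> z - (\<beta> z)^2))) / 2"

end

theory Submission
  imports Defs
begin

text \<open>The map p + q i \<mapsto> p + q \<lambda> identifies each fiber A_z with \<complex>, since \<lambda> is a root of
  X^2 + \<beta> X + \<alpha> with nonzero imaginary part. Under this identification the generator i
  corresponds to \<lambda>, and i_x, i_y correspond to the derivatives of \<lambda> obtained by implicitly
  differentiating \<lambda>^2 + \<beta> \<lambda> + \<alpha> = 0, namely \<lambda>_x = -(\<alpha>_x + \<beta>_x \<lambda>)/(2\<lambda> + \<beta>). Hence the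
  rigidity equation is carried to \<lambda>_x + \<lambda> \<lambda>_y = 0 by an injective ring homomorphism.\<close>

definition upper_root :: "real \<Rightarrow> real \<Rightarrow> complex" where
  "upper_root a b = (- of_real b + \<i> * of_real (sqrt (4 * a - b^2))) / 2"

lemma lam_eq_upper_root: "lam \<alpha> \<beta> = (\<lambda>z. upper_root (\<alpha> z) (\<beta> z))"
  by (simp add: fun_eq_iff lam_def upper_root_def)

lemma upper_root_squared:
  assumes "4 * a - b^2 \<ge> 0"
  shows "upper_root a b * upper_root a b = - of_real a - of_real b * upper_root a b"
  using assms by (simp add: upper_root_def complex_eq_iff power2_eq_square field_simps)

lemma two_upper_root_plus:
  "2 * upper_root a b + of_real b = \<i> * of_real (sqrt (4 * a - b^2))"
  by (simp add: upper_root_def diff_divide_distrib)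

lemma has_vector_derivative_upper_root:
  assumes "(f has_real_derivative a') (at x)" and "(g has_real_derivative b') (at x)"
    and "4 * f x - (g x)^2 > 0"
  shows "((\<lambda>t. upper_root (f t) (g t)) has_vector_derivative
          - (of_real a' + of_real b' * upper_root (f x) (g x))
            / (2 * upper_root (f x) (g x) + of_real (g x))) (at x)"
proof -
  define s where "s = sqrt (4 * f x - (g x)^2)"
  have s_pos: "s > 0"
    using assms(3) by (simp add: s_def)
  have "((\<lambda>t. 4 * f t - (g t)^2) has_real_derivative 4 * a' - 2 * g x * b') (at x)"
    using assms(1,2) by (auto intro!: derivative_eq_intros)
  from DERIV_chain2[OF DERIV_real_sqrt[OF assms(3)] this]
  have "((\<lambda>t. sqrt (4 * f t - (g t)^2)) has_real_derivative (4 * a' - 2 * g x * b') / (2 * s)) (at x)"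
    by (simp add: s_def field_simps)
  then have "((\<lambda>t. upper_root (f t) (g t)) has_vector_derivative
               (- of_real b' + \<i> * of_real ((4 * a' - 2 * g x * b') / (2 * s))) / 2) (at x)"
    unfolding upper_root_def
    by (intro has_vector_derivative_divide has_vector_derivative_add has_vector_derivative_minus
        has_vector_derivative_mult_right has_vector_derivative_of_real assms(2))
  moreover have "(- of_real b' + \<i> * of_real ((4 * a' - 2 * g x * b') / (2 * s))) / 2
      = - (of_real a' + of_real b' * upper_root (f x) (g x))
          / (2 * upper_root (f x) (g x) + of_real (g x))"
  proof -
    have "(- of_real b' + \<i> * of_real ((4 * a' - 2 * g x * b') / (2 * s))) / 2 * (\<i> * of_real s)
        = - (of_real a' + of_real b' * upper_root (f x) (g x))"
      using s_pos unfolding upper_root_def s_def[symmetric] by (simp add: complex_eq_iff field_simps)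
    then show ?thesis
      using s_pos by (simp add: two_upper_root_plus s_def[symmetric] eq_divide_eq)
  qed
  ultimately show ?thesis by (simp only:)
qed

definition fiber_to_complex :: "real \<Rightarrow> real \<Rightarrow> real \<times> real \<Rightarrow> complex" where
  "fiber_to_complex a b u = of_real (fst u) + of_real (snd u) * upper_root a b"

lemma fiber_to_complex_add:
  "fiber_to_complex a b (u + v) = fiber_to_complex a b u + fiber_to_complex a b v"
  by (simp add: fiber_to_complex_def algebra_simps)

lemma fiber_to_complex_minus: "fiber_to_complex a b (- u) = - fiber_to_complex a b u"
  by (simp add: fiber_to_complex_def algebra_simps)

lemma fiber_to_complex_gen: "fiber_to_complex a b gen = upper_root a b"
  by (simp add: fiber_to_complex_def gen_def)

lemma fiber_to_complex_amul:
  assumes "4 * a - b^2 \<ge> 0"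
  shows "fiber_to_complex a b (amul a b u v) = fiber_to_complex a b u * fiber_to_complex a b v"
proof -
  let ?L = "upper_root a b"
  have "fiber_to_complex a b u * fiber_to_complex a b v
      = of_real (fst u * fst v) + of_real (fst u * snd v + snd u * fst v) * ?L
        + of_real (snd u * snd v) * (?L * ?L)"
    by (simp add: fiber_to_complex_def algebra_simps)
  also have "\<dots> = fiber_to_complex a b (amul a b u v)"
    unfolding upper_root_squared[OF assms] by (simp add: fiber_to_complex_def amul_def algebra_simps)
  finally show ?thesis by simp
qed

lemma fiber_to_complex_inv2ib:
  assumes "4 * a - b^2 > 0"
  shows "fiber_to_complex a b (inv2ib a b) = inverse (2 * upper_root a b + of_real b)"
proof -
  define s where "s = sqrt (4 * a - b^2)"
  have "s > 0" and s2: "4 * a - b^2 = s^2"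
    using assms by (simp_all add: s_def)
  moreover have "inverse (\<i> * of_real s) = - \<i> * of_real (1 / s)"
    using \<open>s > 0\<close> by (simp add: field_simps)
  ultimately show ?thesis
    unfolding two_upper_root_plus s_def[symmetric]
    by (simp add: fiber_to_complex_def inv2ib_def upper_root_def s2 complex_eq_iff field_simps power2_eq_square)
qed

lemma fiber_to_complex_eq_0_iff:
  assumes "4 * a - b^2 > 0"
  shows "fiber_to_complex a b u = 0 \<longleftrightarrow> u = 0"
proof
  assume "fiber_to_complex a b u = 0"
  then have "Im (fiber_to_complex a b u) = 0" and "Re (fiber_to_complex a b u) = 0"
    by simp_all
  then show "u = 0"
    using assms by (cases u) (auto simp: fiber_to_complex_def upper_root_def zero_prod_def)
qed (simp add: fiber_to_complex_def zero_prod_def)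

lemma fiber_to_complex_implicit_derivative:
  assumes "4 * a - b^2 > 0"
  shows "fiber_to_complex a b (- amul a b (p, q) (inv2ib a b))
       = - (of_real p + of_real q * upper_root a b) / (2 * upper_root a b + of_real b)"
proof -
  have "fiber_to_complex a b (- amul a b (p, q) (inv2ib a b))
      = - (fiber_to_complex a b (p, q) * fiber_to_complex a b (inv2ib a b))"
    using assms by (simp add: fiber_to_complex_minus fiber_to_complex_amul)
  also have "\<dots> = - fiber_to_complex a b (p, q) / (2 * upper_root a b + of_real b)"
    using assms by (simp add: fiber_to_complex_inv2ib divide_inverse)
  finally show ?thesis
    by (simp add: fiber_to_complex_def)
qed

lemma has_vector_derivative_partial_x:
  assumes "(f has_derivative f') (at z)"
  shows "((\<lambda>t. f (t, snd z)) has_vector_derivative f' (1, 0)) (at (fst z))"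
proof -
  have "((\<lambda>t. (t, snd z)) has_derivative (\<lambda>h. (h, 0))) (at (fst z))"
    by (auto intro!: derivative_eq_intros)
  from has_derivative_compose[OF this, of f f'] assms
  have "((\<lambda>t. f (t, snd z)) has_derivative (\<lambda>h. f' (h, 0))) (at (fst z))"
    by (cases z) (simp add: o_def)
  moreover have "(\<lambda>h. f' (h, 0)) = (\<lambda>h. h *\<^sub>R f' (1, 0))"
  proof
    fix h
    show "f' (h, 0) = h *\<^sub>R f' (1, 0)"
      using linear_scale[OF has_derivative_linear[OF assms], of h "(1, 0)"] by simp
  qed
  ultimately show ?thesis
    by (simp add: has_vector_derivative_def)
qed

lemma has_vector_derivative_partial_y:
  assumes "(f has_derivative f') (at z)"
  shows "((\<lambda>t. f (fst z, t)) has_vector_derivative f' (0, 1)) (at (snd z))"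
proof -
  have "((\<lambda>t. (fst z, t)) has_derivative (\<lambda>h. (0, h))) (at (snd z))"
    by (auto intro!: derivative_eq_intros)
  from has_derivative_compose[OF this, of f f'] assms
  have "((\<lambda>t. f (fst z, t)) has_derivative (\<lambda>h. f' (0, h))) (at (snd z))"
    by (cases z) (simp add: o_def)
  moreover have "(\<lambda>h. f' (0, h)) = (\<lambda>h. h *\<^sub>R f' (0, 1))"
  proof
    fix h
    show "f' (0, h) = h *\<^sub>R f' (0, 1)"
      using linear_scale[OF has_derivative_linear[OF assms], of h "(0, 1)"] by simp
  qed
  ultimately show ?thesis
    by (simp add: has_vector_derivative_def)
qed

lemma px_eq_derivative:
  assumes "(f has_derivative f') (at z)"
  shows "px f z = f' (1, 0)"
  unfolding px_def using vector_derivative_at[OF has_vector_derivative_partial_x[OF assms]] .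

lemma py_eq_derivative:
  assumes "(f has_derivative f') (at z)"
  shows "py f z = f' (0, 1)"
  unfolding py_def using vector_derivative_at[OF has_vector_derivative_partial_y[OF assms]] .

lemma px_lam:
  assumes "(\<alpha> has_derivative \<alpha>') (at z)" and "(\<beta> has_derivative \<beta>') (at z)"
    and "4 * \<alpha> z - (\<beta> z)^2 > 0"
  shows "px (lam \<alpha> \<beta>) z
       = - (of_real (px \<alpha> z) + of_real (px \<beta> z) * lam \<alpha> \<beta> z) / (2 * lam \<alpha> \<beta> z + of_real (\<beta> z))"
proof -
  have "((\<lambda>t. \<alpha> (t, snd z)) has_real_derivative px \<alpha> z) (at (fst z))"
    and "((\<lambda>t. \<beta> (t, snd z)) has_real_derivative px \<beta> z) (at (fst z))"
    using has_vector_derivative_partial_x[OF assms(1)] has_vector_derivative_partial_x[OF assms(2)]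
    by (simp_all add: px_eq_derivative[OF assms(1)] px_eq_derivative[OF assms(2)] has_real_derivative_iff_has_vector_derivative)
  from has_vector_derivative_upper_root[OF this] assms(3) show ?thesis
    by (simp add: px_def lam_eq_upper_root vector_derivative_at)
qed

lemma py_lam:
  assumes "(\<alpha> has_derivative \<alpha>') (at z)" and "(\<beta> has_derivative \<beta>') (at z)"
    and "4 * \<alpha> z - (\<beta> z)^2 > 0"
  shows "py (lam \<alpha> \<beta>) z
       = - (of_real (py \<alpha> z) + of_real (py \<beta> z) * lam \<alpha> \<beta> z) / (2 * lam \<alpha> \<beta> z + of_real (\<beta> z))"
proof -
  have "((\<lambda>t. \<alpha> (fst z, t)) has_real_derivative py \<alpha> z) (at (snd z))"
    and "((\<lambda>t. \<beta> (fst z, t)) has_real_derivative py \<beta> z) (at (snd z))"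
    using has_vector_derivative_partial_y[OF assms(1)] has_vector_derivative_partial_y[OF assms(2)]
    by (simp_all add: py_eq_derivative[OF assms(1)] py_eq_derivative[OF assms(2)] has_real_derivative_iff_has_vector_derivative)
  from has_vector_derivative_upper_root[OF this] assms(3) show ?thesis
    by (simp add: py_def lam_eq_upper_root vector_derivative_at)
qed

lemma rigid_at_iff:
  assumes "(\<alpha> has_derivative \<alpha>') (at z)" and "(\<beta> has_derivative \<beta>') (at z)"
    and \<Delta>: "4 * \<alpha> z - (\<beta> z)^2 > 0"
  shows "i_x \<alpha> \<beta> z + amul (\<alpha> z) (\<beta> z) gen (i_y \<alpha> \<beta> z) = 0 \<longleftrightarrow>
         px (lam \<alpha> \<beta>) z + lam \<alpha> \<beta> z * py (lam \<alpha> \<beta>) z = 0"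
proof -
  have lam_z: "lam \<alpha> \<beta> z = upper_root (\<alpha> z) (\<beta> z)"
    by (simp add: lam_eq_upper_root)
  have "fiber_to_complex (\<alpha> z) (\<beta> z) (i_x \<alpha> \<beta> z + amul (\<alpha> z) (\<beta> z) gen (i_y \<alpha> \<beta> z))
      = fiber_to_complex (\<alpha> z) (\<beta> z) (i_x \<alpha> \<beta> z)
        + upper_root (\<alpha> z) (\<beta> z) * fiber_to_complex (\<alpha> z) (\<beta> z) (i_y \<alpha> \<beta> z)"
    using \<Delta> by (simp add: fiber_to_complex_add fiber_to_complex_amul fiber_to_complex_gen)
  also have "\<dots> = px (lam \<alpha> \<beta>) z + lam \<alpha> \<beta> z * py (lam \<alpha> \<beta>) z"
    unfolding i_x_def i_y_def fiber_to_complex_implicit_derivative[OF \<Delta>]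
      px_lam[OF assms] py_lam[OF assms] lam_z ..
  finally show ?thesis
    using fiber_to_complex_eq_0_iff[OF \<Delta>] by metis
qed

theorem proposition3p1:
  fixes \<Omega> :: "(real \<times> real) set" and \<alpha> \<beta> :: "real \<times> real \<Rightarrow> real"
  assumes "open \<Omega>" and "C1_on \<Omega> \<alpha>" and "C1_on \<Omega> \<beta>"
    and "\<forall>z\<in>\<Omega>. 4 * \<alpha> z - (\<beta> z)^2 > 0"
  shows "rigid \<Omega> \<alpha> \<beta> \<longleftrightarrow>
         (\<forall>z\<in>\<Omega>. px (lam \<alpha> \<beta>) z + lam \<alpha> \<beta> z * py (lam \<alpha> \<beta>) z = 0)"
proof -
  obtain A where "\<forall>z\<in>\<Omega>. (\<alpha> has_derivative blinfun_apply (A z)) (at z)"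
    using assms(2) unfolding C1_on_def by blast
  moreover obtain B where "\<forall>z\<in>\<Omega>. (\<beta> has_derivative blinfun_apply (B z)) (at z)"
    using assms(3) unfolding C1_on_def by blast
  ultimately show ?thesis
    unfolding rigid_def using rigid_at_iff assms(4) by blast
qed

end
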